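(* Let $s\in\{1,2\}$ and let $C^s=\{L^s_{a_0,b_0},\dots,L^s_{a_4,b_4}\}\subset\mathcal{L}^s$ be a set of pairwise disjoint lines on ${\rm F}_5$ with $\#C^s=5$. If $\#\{a_0,\dots,a_4\}\le3$, then $\#\psi_5(C^s)\ge3$.
   Context: ${\rm F}_5\subset\mathbb{P}^3(\mathbb{C})$ is the surface $x^5-y^5-z^5+w^5=0$. Let $\eta$ be a primitive 5th root of unity and $v=-1$. For $k,i\in\{0,\dots,4\}$ define $L^1_{k,i}:\{x=\eta^{k+i}z,\ y=\eta^i w\}$, $L^2_{k,i}:\{x=v\eta^i w,\ y=v\eta^{k+i}z\}$, and $\mathcal{L}^s=\{L^s_{k,i}\}_{k,i}$. Define $\psi_5(k,i)=r_5(k+2i)$ with $r_5$ the remainder modulo 5, and $\psi_5(X)$ the set of values $\psi_5(k,i)$ over the lines $L^s_{k,i}\in X$. *)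

theory Defs
  imports Complex_Main
begin

text \<open>Points of P^3(C) are represented by nonzero vectors (x,y,z,w) in C^4; a line in
P^3 is represented by the set of nonzero vectors of the corresponding 2-dimensional
subspace. Two projective lines are disjoint iff these sets are disjoint.\<close>

type_synonym pt4 = "complex \<times> complex \<times> complex \<times> complex"

definition fermat5 :: "pt4 set" where
  "fermat5 = {(x,y,z,w). (x,y,z,w) \<noteq> (0,0,0,0) \<and> x^5 - y^5 - z^5 + w^5 = 0}"

definition primitive5 :: "complex \<Rightarrow> bool" where
  "primitive5 \<eta> \<longleftrightarrow> \<eta> ^ 5 = 1 \<and> \<eta> \<noteq> 1"

text \<open>The lines L^s_{k,i}, with v = -1.\<close>
definition Fline :: "complex \<Rightarrow> nat \<Rightarrow> nat \<Rightarrow> nat \<Rightarrow> pt4 set" where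
  "Fline \<eta> s k i =
     (if s = 1 then {(x,y,z,w). (x,y,z,w) \<noteq> (0,0,0,0) \<and> x = \<eta>^(k+i) * z \<and> y = \<eta>^i * w}
      else {(x,y,z,w). (x,y,z,w) \<noteq> (0,0,0,0) \<and> x = (-1) * \<eta>^i * w \<and> y = (-1) * \<eta>^(k+i) * z})"

definition psi5 :: "nat \<times> nat \<Rightarrow> nat" where
  "psi5 p = (fst p + 2 * snd p) mod 5"

end

theory Submission
  imports Defs "HOL-Computational_Algebra.Primes" "HOL-Number_Theory.Cong"
begin

text \<open>Disjointness of the lines \<open>L\<^sup>s\<^sub>k\<^sub>,\<^sub>i\<close> forces both \<open>i\<close> and \<open>k + i\<close> to run through all
residues mod 5, so \<open>\<Sum> \<psi>\<^sub>5 \<equiv> \<Sum> (k + i) + \<Sum> i \<equiv> 0 (mod 5)\<close>. If \<open>\<psi>\<^sub>5\<close> took exactly two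
values \<open>c \<noteq> d\<close>, with multiplicities \<open>a\<close> and \<open>5 - a\<close>, this sum would be \<open>\<equiv> a (c - d) \<not>\<equiv> 0\<close>.
If \<open>\<psi>\<^sub>5\<close> were constant, \<open>k \<equiv> \<psi>\<^sub>5 - 2 i\<close> would be determined by \<open>i\<close>, so all five \<open>k\<close> would
differ.\<close>

lemma power_mod_if_power_eq_1:
  fixes x :: "'a::monoid_mult"
  assumes "x ^ n = 1"
  shows "x ^ m = x ^ (m mod n)"
proof -
  have "x ^ m = (x ^ n) ^ (m div n) * x ^ (m mod n)"
    by (simp flip: power_mult power_add)
  with assms show ?thesis by simp
qed

lemma Fline_intersect_if_eq_pow:
  assumes "\<eta> ^ i = \<eta> ^ i' \<or> \<eta> ^ (k + i) = \<eta> ^ (k' + i')"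
  shows "Fline \<eta> s k i \<inter> Fline \<eta> s k' i' \<noteq> {}"
  using assms
proof
  assume "\<eta> ^ i = \<eta> ^ i'"
  then have "(if s = 1 then (0, \<eta> ^ i, 0, 1) else (- (\<eta> ^ i), 0, 0, 1)) \<in>
               Fline \<eta> s k i \<inter> Fline \<eta> s k' i'"
    by (simp add: Fline_def)
  then show ?thesis by blast
next
  assume "\<eta> ^ (k + i) = \<eta> ^ (k' + i')"
  then have "(if s = 1 then (\<eta> ^ (k + i), 0, 1, 0) else (0, - (\<eta> ^ (k + i)), 1, 0)) \<in>
               Fline \<eta> s k i \<inter> Fline \<eta> s k' i'"
    by (simp add: Fline_def)
  then show ?thesis by blast
qed

lemma inj_on_Fline_indices_if_disjoint:
  assumes "\<eta> ^ 5 = 1"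
    and "\<forall>p\<in>S. \<forall>q\<in>S. p \<noteq> q \<longrightarrow>
           Fline \<eta> s (fst p) (snd p) \<inter> Fline \<eta> s (fst q) (snd q) = {}"
  shows "inj_on (\<lambda>p. snd p mod 5) S" "inj_on (\<lambda>p. (fst p + snd p) mod 5) S"
proof -
  have eq_if_pow_eq: "p = q"
    if "p \<in> S" "q \<in> S" "\<eta> ^ snd p = \<eta> ^ snd q \<or> \<eta> ^ (fst p + snd p) = \<eta> ^ (fst q + snd q)"
    for p q
    using that assms(2) Fline_intersect_if_eq_pow by metis
  have \<eta>_pow: "\<eta> ^ n = \<eta> ^ (n mod 5)" for n
    using power_mod_if_power_eq_1[OF assms(1)] .
  show "inj_on (\<lambda>p. snd p mod 5) S"
    by (rule inj_onI) (metis eq_if_pow_eq \<eta>_pow)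
  show "inj_on (\<lambda>p. (fst p + snd p) mod 5) S"
    by (rule inj_onI) (metis eq_if_pow_eq \<eta>_pow)
qed

lemma sum_eq_sum_lessThan_if_inj_on:
  assumes "inj_on f S" "f ` S \<subseteq> {..<n}" "card S = n"
  shows "sum f S = (\<Sum>i<n. i)"
proof -
  have "f ` S = {..<n}"
    using assms by (intro card_subset_eq) (simp_all add: card_image)
  then show ?thesis
    using sum.reindex[OF assms(1), of id] by simp
qed

lemma prime_not_dvd_sum_two_valued:
  fixes g :: "'a \<Rightarrow> nat"
  assumes "prime p" "card S = p" "g ` S = {c, d}" "c mod p \<noteq> d mod p"
  shows "\<not> p dvd sum g S"
proof
  assume dvd: "p dvd sum g S"
  define A where "A = {x \<in> S. g x = c}"
  have fin: "finite S"
    using assms(1,2) card.infinite not_prime_0 by metis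
  have "c \<noteq> d"
    using assms(4) by auto
  then have g_outside_A: "\<forall>x \<in> S - A. g x = d"
    using assms(3) A_def by auto
  obtain a b where "a \<in> S" "g a = c" "b \<in> S" "g b = d"
    using assms(3) by (metis imageE insertI1 insertI2)
  then have "A \<noteq> {}" "S - A \<noteq> {}"
    using \<open>c \<noteq> d\<close> A_def by auto
  then have A_bounds: "0 < card A" "card A < p"
    using fin A_def assms(2) by (auto intro!: psubset_card_mono simp: card_gt_0_iff)
  have "A \<subseteq> S"
    by (auto simp: A_def)
  have "sum g S = sum g (S - A) + sum g A"
    by (rule sum.subset_diff[OF \<open>A \<subseteq> S\<close> fin])
  also have "sum g (S - A) = (p - card A) * d"
    using g_outside_A fin \<open>A \<subseteq> S\<close> assms(2) by (simp add: card_Diff_subset finite_subset)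
  also have "sum g A = card A * c"
    by (simp add: A_def)
  finally have "sum g S = (p - card A) * d + card A * c" .
  then have "int (sum g S) = (int p - int (card A)) * int d + int (card A) * int c"
    using A_bounds by simp
  also have "\<dots> = int (card A) * (int c - int d) + int d * int p"
    by (simp add: algebra_simps)
  finally have "int (sum g S) = int (card A) * (int c - int d) + int d * int p" .
  moreover have "int p dvd int (sum g S)"
    using dvd by (simp only: int_dvd_int_iff)
  ultimately have "int p dvd int (card A) * (int c - int d)"
    by simp
  moreover have "\<not> int p dvd int (card A)"
    using A_bounds by (auto dest: dvd_imp_le)
  moreover have "\<not> int p dvd int c - int d"
    using assms(4) mod_eq_dvd_iff[of "int c" "int p" "int d"] by (simp flip: zmod_int)
  ultimately show False
    using assms(1) by (simp add: prime_dvd_mult_iff)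
qed

lemma psi5_eq_imp_snd_eq:
  assumes "psi5 (k, i) = psi5 (k, j)" "i < 5" "j < 5"
  shows "i = j"
proof -
  have "[k + 2 * i = k + 2 * j] (mod 5)"
    using assms(1) by (simp add: psi5_def cong_def)
  then have "[i = j] (mod 5)"
    by (simp add: cong_add_lcancel_nat cong_mult_lcancel_nat)
  then show ?thesis
    using assms(2,3) by (rule cong_less_modulus_unique_nat)
qed

lemma inj_on_fst_if_psi5_constant:
  assumes "inj_on snd S" "snd ` S \<subseteq> {..<5}" "psi5 ` S \<subseteq> {c}"
  shows "inj_on fst S"
proof (rule inj_onI)
  fix p q
  assume pq: "p \<in> S" "q \<in> S" "fst p = fst q"
  have "psi5 p = psi5 q"
    using assms(3) pq(1,2) by blast
  with pq(3) have "psi5 (fst p, snd p) = psi5 (fst p, snd q)"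
    by (simp add: psi5_def)
  moreover have "snd p < 5" "snd q < 5"
    using assms(2) pq(1,2) by auto
  ultimately have "snd p = snd q"
    by (rule psi5_eq_imp_snd_eq)
  then show "p = q"
    using inj_onD[OF assms(1) _ pq(1,2)] by simp
qed

lemma five_dvd_sum_psi5:
  assumes "card S = 5" "inj_on snd S" "snd ` S \<subseteq> {..<5}"
    and "inj_on (\<lambda>p. (fst p + snd p) mod 5) S"
  shows "5 dvd sum psi5 S"
proof -
  let ?h = "\<lambda>p. (fst p + snd p) mod 5"
  have "?h ` S \<subseteq> {..<5}"
    by auto
  then have sum_h: "sum ?h S = 10"
    using sum_eq_sum_lessThan_if_inj_on[OF assms(4) _ assms(1)]
    by (simp add: lessThan_nat_numeral)
  have sum_snd: "sum snd S = 10"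
    using sum_eq_sum_lessThan_if_inj_on[OF assms(2,3,1)]
    by (simp add: lessThan_nat_numeral)
  have "psi5 p = (?h p + snd p) mod 5" for p
    by (simp add: psi5_def mod_add_left_eq mult_2 add.assoc)
  then have "sum psi5 S mod 5 = (\<Sum>p\<in>S. ?h p + snd p) mod 5"
    by (simp add: mod_sum_eq)
  also have "\<dots> = 0"
    by (simp add: sum.distrib sum_h sum_snd)
  finally show ?thesis
    by presburger
qed

lemma card_psi5_image_ne_2:
  assumes "card S = 5" "5 dvd sum psi5 S"
  shows "card (psi5 ` S) \<noteq> 2"
proof
  assume "card (psi5 ` S) = 2"
  then obtain c d where cd: "psi5 ` S = {c, d}" "c \<noteq> d"
    by (auto simp: card_2_iff)
  moreover have "psi5 ` S \<subseteq> {..<5}"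
    by (auto simp: psi5_def)
  ultimately have "c mod 5 \<noteq> d mod 5"
    by auto
  with cd(1) assms show False
    using prime_not_dvd_sum_two_valued[of 5 S psi5 c d] by simp
qed

theorem lemma3p4:
  fixes \<eta> :: complex and s :: nat and S :: "(nat \<times> nat) set"
  assumes "primitive5 \<eta>"
    and "s \<in> {1, 2}"
    and "S \<subseteq> {0..4} \<times> {0..4}"
    and "card S = 5"
    and "\<forall>p\<in>S. \<forall>q\<in>S. p \<noteq> q \<longrightarrow>
           Fline \<eta> s (fst p) (snd p) \<inter> Fline \<eta> s (fst q) (snd q) = {}"
    and "card (fst ` S) \<le> 3"
  shows "card (psi5 ` S) \<ge> 3"
proof -
  have "\<eta> ^ 5 = 1"
    using assms(1) by (simp add: primitive5_def)
  note inj = inj_on_Fline_indices_if_disjoint[OF this assms(5)]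
  have snd_lt: "snd ` S \<subseteq> {..<5}"
    using assms(3) by auto
  then have "inj_on snd S = inj_on (\<lambda>p. snd p mod 5) S"
    by (intro inj_on_cong) auto
  with inj(1) have inj_snd: "inj_on snd S"
    by simp
  have "card (psi5 ` S) \<noteq> 0"
    using assms(4) card.infinite by (fastforce simp: card_eq_0_iff)
  moreover have "card (psi5 ` S) \<noteq> 1"
  proof
    assume "card (psi5 ` S) = 1"
    then have "inj_on fst S"
      using inj_on_fst_if_psi5_constant[OF inj_snd snd_lt] by (auto simp: card_1_singleton_iff)
    with assms(4,6) show False
      by (simp add: card_image)
  qed
  moreover have "card (psi5 ` S) \<noteq> 2"
    using card_psi5_image_ne_2 five_dvd_sum_psi5 assms(4) inj_snd snd_lt inj(2) by blast
  ultimately show ?thesis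
    by linarith
qed

end
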